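(* Let $\Sigma_{\mathrm{D}}=(\mathcal{S}_{\mathrm{D}},\mathcal{A}_{\mathrm{D}},\Delta,\overline{g},\underline{g})$ be a finite nondeterministic transition system as in the context and let $\gamma\in(0,1)$. Then there exist deterministic maximally and minimally optimal policies for $\Sigma_{\mathrm{D}}$; in particular they are given by $$\overline{\pi}^\star(s)=\arg\max_{a}\ \overline{q}^\star(s,a),\qquad \underline{\pi}^\star(s)=\arg\max_{a}\ \underline{q}^\star(s,a),$$ that is, $\overline{v}_{\overline{\pi}^\star}=\overline{v}^\star$ and $\underline{v}_{\underline{\pi}^\star}=\underline{v}^\star$.
   Context: $\mathcal{S}_{\mathrm{D}},\mathcal{A}_{\mathrm{D}}$ are finite; $\mathcal{A}_{\mathrm{D}}(s)\subseteq\mathcal{A}_{\mathrm{D}}$ are nonempty sets of enabled inputs and the maxima over $a$ are over $\mathcal{A}_{\mathrm{D}}(s)$; for $a\in\mathcal{A}_{\mathrm{D}}(s)$, $\Delta(s,a)\subseteq\mathcal{S}_{\mathrm{D}}$ is nonempty; $\overline{g},\underline{g}:\mathcal{S}_{\mathrm{D}}\times\mathcal{A}_{\mathrm{D}}\to\mathbb{R}$. A policy is a map $\pi$ with $\pi(s)\in\mathcal{A}_{\mathrm{D}}(s)$. For runs $s_0,s_1,\dots$ with actions $a_i\in\mathcal{A}_{\mathrm{D}}(s_i)$ and $s_{i+1}\in\Delta(s_i,a_i)$, the maximal return is $\sum_{i\ge0}\gamma^i\overline{g}(s_i,a_i)$ and the minimal return $\sum_{i\ge0}\gamma^i\underline{g}(s_i,a_i)$.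 $\overline{v}_\pi(s)$ (resp. $\underline{v}_\pi(s)$): maximum of maximal return (resp. minimum of minimal return) over runs from $s$ with $a_i=\pi(s_i)$. $\overline{q}_\pi(s,a)$ (resp. $\underline{q}_\pi(s,a)$): same but with $a_0=a$ and $a_i=\pi(s_i)$ for $i\ge1$. Optimal functions: $\overline{v}^\star=\max_\pi\overline{v}_\pi$, $\underline{v}^\star=\max_\pi\underline{v}_\pi$, $\overline{q}^\star=\max_\pi\overline{q}_\pi$, $\underline{q}^\star=\max_\pi\underline{q}_\pi$ (pointwise). A policy $\pi$ is maximally (resp. minimally) optimal if $\overline{v}_\pi=\overline{v}^\star$ (resp. $\underline{v}_\pi=\underline{v}^\star$). *)

theory Defs
  imports Complex_Main
begin

definition is_run :: "('s \<Rightarrow> 'a set) \<Rightarrow> ('s \<Rightarrow> 'a \<Rightarrow> 's set) \<Rightarrow> (nat \<Rightarrow> 's) \<Rightarrow> (nat \<Rightarrow> 'a) \<Rightarrow> bool" where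
  "is_run A Delta s a \<longleftrightarrow> (\<forall>i. a i \<in> A (s i) \<and> s (Suc i) \<in> Delta (s i) (a i))"

definition disc_return :: "real \<Rightarrow> ('s \<Rightarrow> 'a \<Rightarrow> real) \<Rightarrow> (nat \<Rightarrow> 's) \<Rightarrow> (nat \<Rightarrow> 'a) \<Rightarrow> real" where
  "disc_return \<gamma> g s a = (\<Sum>i. \<gamma> ^ i * g (s i) (a i))"

definition is_policy :: "('s \<Rightarrow> 'a set) \<Rightarrow> ('s \<Rightarrow> 'a) \<Rightarrow> bool" where
  "is_policy A \<pi> \<longleftrightarrow> (\<forall>s. \<pi> s \<in> A s)"

definition v_returns where
  "v_returns A Delta \<gamma> g \<pi> s0 =
     {disc_return \<gamma> g s a | s a. is_run A Delta s a \<and> s 0 = s0 \<and> (\<forall>i. a i = \<pi> (s i))}"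

definition q_returns where
  "q_returns A Delta \<gamma> g \<pi> s0 a0 =
     {disc_return \<gamma> g s a | s a. is_run A Delta s a \<and> s 0 = s0 \<and> a 0 = a0 \<and>
                                 (\<forall>i\<ge>1. a i = \<pi> (s i))}"

definition v_max where "v_max A Delta \<gamma> gmax \<pi> s0 = Sup (v_returns A Delta \<gamma> gmax \<pi> s0)"
definition v_min where "v_min A Delta \<gamma> gmin \<pi> s0 = Inf (v_returns A Delta \<gamma> gmin \<pi> s0)"
definition q_max where "q_max A Delta \<gamma> gmax \<pi> s0 a0 = Sup (q_returns A Delta \<gamma> gmax \<pi> s0 a0)"
definition q_min where "q_min A Delta \<gamma> gmin \<pi> s0 a0 = Inf (q_returns A Delta \<gamma> gmin \<pi> s0 a0)"

definition v_max_opt :: "('s::finite \<Rightarrow> 'a::finite set) \<Rightarrow> _" where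
  "v_max_opt A Delta \<gamma> gmax s0 = Max {v_max A Delta \<gamma> gmax \<pi> s0 | \<pi>. is_policy A \<pi>}"
definition v_min_opt :: "('s::finite \<Rightarrow> 'a::finite set) \<Rightarrow> _" where
  "v_min_opt A Delta \<gamma> gmin s0 = Max {v_min A Delta \<gamma> gmin \<pi> s0 | \<pi>. is_policy A \<pi>}"
definition q_max_opt :: "('s::finite \<Rightarrow> 'a::finite set) \<Rightarrow> _" where
  "q_max_opt A Delta \<gamma> gmax s0 a0 = Max {q_max A Delta \<gamma> gmax \<pi> s0 a0 | \<pi>. is_policy A \<pi>}"
definition q_min_opt :: "('s::finite \<Rightarrow> 'a::finite set) \<Rightarrow> _" where
  "q_min_opt A Delta \<gamma> gmin s0 a0 = Max {q_min A Delta \<gamma> gmin \<pi> s0 a0 | \<pi>. is_policy A \<pi>}"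

end

theory Submission
  imports Defs
begin

(* For a fixed policy pi, the maximal value satisfies the Bellman equation
   v(s) = g(s, pi s) + gamma * max {v s' | s' in Delta(s, pi s)}, and the minimal value the same
   equation with min. Max and min are nonexpansive, so for gamma < 1 the right-hand side is a
   contraction in the sup norm: v is its unique fixed point, dominates every subsolution and is
   dominated by every supersolution.
   Among the finitely many policies pick one, pi0, maximising the total value sum_s v(s). No
   enabled input a can improve the one-step lookahead of v_pi0 at any state s: otherwise
   switching pi0 to a at s yields a policy whose value dominates v_pi0 and strictly exceeds it
   at s. Hence v_pi0 is a supersolution for every policy, so pi0 is optimal, and v* satisfies
   the optimality equation v*(s) = max_a q*(s, a) with q*(s, a) the lookahead of v*. For a
   policy that is greedy with respect to q*, v* is then a fixed point of its own Bellman
   equation, so its value is v*. *)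

lemma le_if_diff_contracts:
  fixes U W :: "'x::finite \<Rightarrow> real"
  assumes "\<gamma> < 1" and contracts: "\<And>M y. (\<And>x. U x - W x \<le> M) \<Longrightarrow> U y - W y \<le> \<gamma> * M"
  shows "U x \<le> W x"
proof -
  define M where "M = Max (range (\<lambda>x. U x - W x))"
  have M_ge: "U x - W x \<le> M" for x
    unfolding M_def by (rule Max_ge) auto
  have "M \<in> range (\<lambda>x. U x - W x)"
    unfolding M_def by (rule Max_in) auto
  then obtain y where "M = U y - W y"
    by blast
  with contracts[OF M_ge, of y] have "M \<le> \<gamma> * M"
    by simp
  with \<open>\<gamma> < 1\<close> have "M \<le> 0"
    by (smt (verit) mult_le_cancel_right1)
  with M_ge[of x] show ?thesis
    by simp
qed

lemma Max_image_diff_le: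
  assumes "finite S" "S \<noteq> {}" "\<And>x. x \<in> S \<Longrightarrow> f x - h x \<le> (c::real)"
  shows "Max (f ` S) - Max (h ` S) \<le> c"
proof -
  have "Max (f ` S) \<in> f ` S"
    using assms(1,2) by (intro Max_in) auto
  then obtain x where x: "x \<in> S" "Max (f ` S) = f x"
    by auto
  moreover have "h x \<le> Max (h ` S)"
    using x assms(1) by simp
  ultimately show ?thesis
    using assms(3)[of x] by linarith
qed

lemma Min_image_diff_le:
  assumes "finite S" "S \<noteq> {}" "\<And>x. x \<in> S \<Longrightarrow> f x - h x \<le> (c::real)"
  shows "Min (f ` S) - Min (h ` S) \<le> c"
proof -
  have "Min (h ` S) \<in> h ` S"
    using assms(1,2) by (intro Min_in) auto
  then obtain x where x: "x \<in> S" "Min (h ` S) = h x"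
    by auto
  moreover have "Min (f ` S) \<le> f x"
    using x assms(1) by simp
  ultimately show ?thesis
    using assms(3)[of x] by linarith
qed

lemma Sup_affine_image:
  fixes X :: "real set"
  assumes "X \<noteq> {}" "bdd_above X" "0 \<le> c"
  shows "Sup ((\<lambda>x. b + c * x) ` X) = b + c * Sup X"
proof -
  have "mono (\<lambda>x. b + c * x)"
    using assms(3) by (simp add: mono_def mult_left_mono)
  moreover have "continuous (at_left (Sup X)) (\<lambda>x. b + c * x)"
    by (intro continuous_intros)
  ultimately show ?thesis
    using continuous_at_Sup_mono[of "\<lambda>x. b + c * x" X] assms(1,2) by simp
qed

lemma Inf_affine_image:
  fixes X :: "real set"
  assumes "X \<noteq> {}" "bdd_below X" "0 \<le> c"
  shows "Inf ((\<lambda>x. b + c * x) ` X) = b + c * Inf X"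
proof -
  have "mono (\<lambda>x. b + c * x)"
    using assms(3) by (simp add: mono_def mult_left_mono)
  moreover have "continuous (at_right (Inf X)) (\<lambda>x. b + c * x)"
    by (intro continuous_intros)
  ultimately show ?thesis
    using continuous_at_Inf_mono[of "\<lambda>x. b + c * x" X] assms(1,2) by simp
qed

lemma Sup_UN_finite:
  fixes X :: "'i \<Rightarrow> 'a::conditionally_complete_linorder set"
  assumes "finite I" "I \<noteq> {}" "\<And>i. i \<in> I \<Longrightarrow> X i \<noteq> {}" "\<And>i. i \<in> I \<Longrightarrow> bdd_above (X i)"
  shows "Sup (\<Union>i\<in>I. X i) = Max ((\<lambda>i. Sup (X i)) ` I)"
proof -
  have "Sup (\<Union>i\<in>I. X i) = (SUP i\<in>I. Sup (X i))"
    using cSUP_UNION[of I X "\<lambda>x. x"] assms by (simp add: bdd_above_UN)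
  also have "\<dots> = Max ((\<lambda>i. Sup (X i)) ` I)"
    using assms(1,2) by (simp add: cSup_eq_Max)
  finally show ?thesis .
qed

lemma Inf_UN_finite:
  fixes X :: "'i \<Rightarrow> 'a::conditionally_complete_linorder set"
  assumes "finite I" "I \<noteq> {}" "\<And>i. i \<in> I \<Longrightarrow> X i \<noteq> {}" "\<And>i. i \<in> I \<Longrightarrow> bdd_below (X i)"
  shows "Inf (\<Union>i\<in>I. X i) = Min ((\<lambda>i. Inf (X i)) ` I)"
proof -
  have "Inf (\<Union>i\<in>I. X i) = (INF i\<in>I. Inf (X i))"
    using cINF_UNION[of I X "\<lambda>x. x"] assms by (simp add: bdd_below_UN)
  also have "\<dots> = Min ((\<lambda>i. Inf (X i)) ` I)"
    using assms(1,2) by (simp add: cInf_eq_Min)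
  finally show ?thesis .
qed

section \<open>Policy evaluation with a nonexpansive successor aggregate\<close>

(* Ext S f aggregates the values f takes on a successor set S: Max for the maximal return,
   Min for the minimal return. *)
locale bellman_system =
  fixes A :: "'s::finite \<Rightarrow> 'a::finite set"
    and D :: "'s \<Rightarrow> 'a \<Rightarrow> 's set"
    and g :: "'s \<Rightarrow> 'a \<Rightarrow> real"
    and \<gamma> :: real
    and Ext :: "'s set \<Rightarrow> ('s \<Rightarrow> real) \<Rightarrow> real"
    and v :: "('s \<Rightarrow> 'a) \<Rightarrow> 's \<Rightarrow> real"
    and q :: "('s \<Rightarrow> 'a) \<Rightarrow> 's \<Rightarrow> 'a \<Rightarrow> real"
  assumes A_nonempty: "A s \<noteq> {}"
    and D_nonempty: "a \<in> A s \<Longrightarrow> D s a \<noteq> {}"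
    and gamma_nonneg: "0 \<le> \<gamma>"
    and gamma_less_one: "\<gamma> < 1"
    and Ext_nonexpansive: "S \<noteq> {} \<Longrightarrow> (\<And>x. x \<in> S \<Longrightarrow> f x - h x \<le> c) \<Longrightarrow> Ext S f - Ext S h \<le> c"
    and q_bellman: "is_policy A \<pi> \<Longrightarrow> a \<in> A s \<Longrightarrow> q \<pi> s a = g s a + \<gamma> * Ext (D s a) (v \<pi>)"
    and v_eq_q: "is_policy A \<pi> \<Longrightarrow> v \<pi> s = q \<pi> s (\<pi> s)"
begin

definition lookahead :: "('s \<Rightarrow> real) \<Rightarrow> 's \<Rightarrow> 'a \<Rightarrow> real" where
  "lookahead W s a = g s a + \<gamma> * Ext (D s a) W"

definition v_opt :: "'s \<Rightarrow> real" where
  "v_opt s = Max {v \<pi> s | \<pi>. is_policy A \<pi>}"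

definition q_opt :: "'s \<Rightarrow> 'a \<Rightarrow> real" where
  "q_opt s a = Max {q \<pi> s a | \<pi>. is_policy A \<pi>}"

lemma q_eq_lookahead: "is_policy A \<pi> \<Longrightarrow> a \<in> A s \<Longrightarrow> q \<pi> s a = lookahead (v \<pi>) s a"
  unfolding lookahead_def by (rule q_bellman)

lemma v_eq_lookahead: "is_policy A \<pi> \<Longrightarrow> v \<pi> s = lookahead (v \<pi>) s (\<pi> s)"
  using v_eq_q q_eq_lookahead unfolding is_policy_def by simp

lemma lookahead_diff_le:
  assumes "a \<in> A s" and "\<And>x. U x - W x \<le> M"
  shows "lookahead U s a - lookahead W s a \<le> \<gamma> * M"
proof -
  have "Ext (D s a) U - Ext (D s a) W \<le> M"
    using D_nonempty[OF assms(1)] assms(2) by (rule Ext_nonexpansive)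
  from mult_left_mono[OF this gamma_nonneg] show ?thesis
    unfolding lookahead_def by (simp add: right_diff_distrib)
qed

lemma lookahead_mono:
  assumes "a \<in> A s" and "\<And>x. U x \<le> W x"
  shows "lookahead U s a \<le> lookahead W s a"
  using lookahead_diff_le[of a s U W 0] assms by simp

lemma v_le_if_lookahead_le:
  assumes \<pi>: "is_policy A \<pi>" and super: "\<And>s. lookahead W s (\<pi> s) \<le> W s"
  shows "v \<pi> s \<le> W s"
proof (rule le_if_diff_contracts[OF gamma_less_one])
  fix M y
  assume "\<And>x. v \<pi> x - W x \<le> M"
  with \<pi> have "lookahead (v \<pi>) y (\<pi> y) - lookahead W y (\<pi> y) \<le> \<gamma> * M"
    unfolding is_policy_def by (intro lookahead_diff_le) auto
  then show "v \<pi> y - W y \<le> \<gamma> * M"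
    using v_eq_lookahead[OF \<pi>, of y] super[of y] by linarith
qed

lemma le_v_if_le_lookahead:
  assumes \<pi>: "is_policy A \<pi>" and sub: "\<And>s. W s \<le> lookahead W s (\<pi> s)"
  shows "W s \<le> v \<pi> s"
proof (rule le_if_diff_contracts[OF gamma_less_one])
  fix M y
  assume "\<And>x. W x - v \<pi> x \<le> M"
  with \<pi> have "lookahead W y (\<pi> y) - lookahead (v \<pi>) y (\<pi> y) \<le> \<gamma> * M"
    unfolding is_policy_def by (intro lookahead_diff_le) auto
  then show "W y - v \<pi> y \<le> \<gamma> * M"
    using v_eq_lookahead[OF \<pi>, of y] sub[of y] by linarith
qed

lemma v_eq_if_lookahead_fixpoint:
  assumes "is_policy A \<pi>" and "\<And>s. W s = lookahead W s (\<pi> s)"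
  shows "v \<pi> = W"
proof
  fix s
  have "v \<pi> s \<le> W s"
    by (rule v_le_if_lookahead_le[OF assms(1)]) (simp add: assms(2)[symmetric])
  moreover have "W s \<le> v \<pi> s"
    by (rule le_v_if_le_lookahead[OF assms(1)]) (simp add: assms(2)[symmetric])
  ultimately show "v \<pi> s = W s"
    by (rule order_antisym)
qed

definition unimprovable :: "('s \<Rightarrow> 'a) \<Rightarrow> bool" where
  "unimprovable \<pi> \<longleftrightarrow> is_policy A \<pi> \<and> (\<forall>s. \<forall>a\<in>A s. lookahead (v \<pi>) s a \<le> v \<pi> s)"

lemma exists_unimprovable_policy: "\<exists>\<pi>. unimprovable \<pi>"
proof -
  define \<Phi> where "\<Phi> \<sigma> = (\<Sum>s\<in>UNIV. v \<sigma> s)" for \<sigma>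
  let ?P = "{\<sigma>. is_policy A \<sigma>}"
  have "(\<lambda>s. SOME a. a \<in> A s) \<in> ?P"
    using A_nonempty unfolding is_policy_def by (simp add: some_in_eq)
  then have "Max (\<Phi> ` ?P) \<in> \<Phi> ` ?P"
    by (intro Max_in) auto
  then obtain \<pi> where \<pi>: "is_policy A \<pi>" and \<pi>_max: "\<Phi> \<pi> = Max (\<Phi> ` ?P)"
    by auto
  have \<Phi>_max: "\<Phi> \<sigma> \<le> \<Phi> \<pi>" if "is_policy A \<sigma>" for \<sigma>
    unfolding \<pi>_max using that by (intro Max_ge) auto
  have "lookahead (v \<pi>) s a \<le> v \<pi> s" if a: "a \<in> A s" for s a
  proof (rule ccontr)
    assume improves: "\<not> lookahead (v \<pi>) s a \<le> v \<pi> s"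
    define \<sigma> where "\<sigma> = \<pi>(s := a)"
    have \<sigma>: "is_policy A \<sigma>"
      using \<pi> a unfolding \<sigma>_def is_policy_def by simp
    have "v \<pi> x \<le> lookahead (v \<pi>) x (\<sigma> x)" for x
      using improves v_eq_lookahead[OF \<pi>, of x] unfolding \<sigma>_def by (cases "x = s") auto
    then have le: "v \<pi> x \<le> v \<sigma> x" for x
      by (rule le_v_if_le_lookahead[OF \<sigma>])
    have "v \<pi> s < lookahead (v \<pi>) s a"
      using improves by simp
    also have "\<dots> \<le> lookahead (v \<sigma>) s a"
      using a le by (rule lookahead_mono)
    also have "\<dots> = v \<sigma> s"
      using v_eq_lookahead[OF \<sigma>, of s] unfolding \<sigma>_def by simp
    finally have "\<Phi> \<pi> < \<Phi> \<sigma>"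
      unfolding \<Phi>_def using le by (intro sum_strict_mono_ex1) auto
    with \<Phi>_max[OF \<sigma>] show False
      by simp
  qed
  with \<pi> show ?thesis
    unfolding unimprovable_def by blast
qed

lemma unimprovable_policy_optimal:
  assumes "unimprovable \<pi>"
  shows "v_opt = v \<pi>" and "a \<in> A s \<Longrightarrow> q_opt s a = q \<pi> s a"
proof -
  have \<pi>: "is_policy A \<pi>"
    using assms unfolding unimprovable_def by blast
  have v_le: "v \<sigma> x \<le> v \<pi> x" if \<sigma>: "is_policy A \<sigma>" for \<sigma> x
    using \<sigma> assms unfolding unimprovable_def is_policy_def by (intro v_le_if_lookahead_le[OF \<sigma>]) auto
  show "v_opt = v \<pi>"
    unfolding v_opt_def fun_eq_iff using \<pi> v_le by (auto intro: Max_eqI)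
  assume a: "a \<in> A s"
  have "q \<sigma> s a \<le> q \<pi> s a" if \<sigma>: "is_policy A \<sigma>" for \<sigma>
    using lookahead_mono[OF a v_le[OF \<sigma>]] q_eq_lookahead[OF \<sigma> a] q_eq_lookahead[OF \<pi> a] by simp
  then show "q_opt s a = q \<pi> s a"
    unfolding q_opt_def using \<pi> by (auto intro: Max_eqI)
qed

lemma q_opt_eq_lookahead:
  assumes "a \<in> A s"
  shows "q_opt s a = lookahead v_opt s a"
proof -
  obtain \<pi> where "unimprovable \<pi>"
    using exists_unimprovable_policy by blast
  with assms show ?thesis
    using unimprovable_policy_optimal q_eq_lookahead unfolding unimprovable_def by simp
qed

lemma bellman_optimality: "v_opt s = Max (q_opt s ` A s)"
proof -
  obtain \<pi> where \<pi>: "unimprovable \<pi>"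
    using exists_unimprovable_policy by blast
  then have "\<pi> s \<in> A s" and "v_opt = v \<pi>"
    unfolding unimprovable_def is_policy_def by (simp_all add: unimprovable_policy_optimal(1)[OF \<pi>])
  moreover have "q_opt s a \<le> v_opt s" if "a \<in> A s" for a
    using that \<pi> q_opt_eq_lookahead calculation(2) unfolding unimprovable_def by simp
  moreover have "q_opt s (\<pi> s) = v_opt s"
    using \<pi> calculation(1,2) q_opt_eq_lookahead v_eq_lookahead unfolding unimprovable_def by simp
  ultimately show ?thesis
    by (intro Max_eqI[symmetric]) (auto intro: image_eqI[where x="\<pi> s"])
qed

theorem exists_optimal_policy: "\<exists>\<pi>. is_policy A \<pi> \<and> v \<pi> = v_opt"
proof -
  obtain \<pi> where \<pi>: "unimprovable \<pi>"
    using exists_unimprovable_policy by blast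
  then have "v_opt = v \<pi>"
    by (rule unimprovable_policy_optimal(1))
  moreover have "is_policy A \<pi>"
    using \<pi> unfolding unimprovable_def by blast
  ultimately show ?thesis
    by auto
qed

theorem greedy_policy_optimal:
  assumes \<pi>: "is_policy A \<pi>" and greedy: "\<And>s. q_opt s (\<pi> s) = Max (q_opt s ` A s)"
  shows "v \<pi> = v_opt"
proof (rule v_eq_if_lookahead_fixpoint[OF \<pi>])
  fix s
  have "v_opt s = Max (q_opt s ` A s)"
    by (rule bellman_optimality)
  also have "\<dots> = q_opt s (\<pi> s)"
    by (rule greedy[symmetric])
  also have "\<dots> = lookahead v_opt s (\<pi> s)"
    using \<pi> unfolding is_policy_def by (simp add: q_opt_eq_lookahead)
  finally show "v_opt s = lookahead v_opt s (\<pi> s)" .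
qed

end

section \<open>Discounted returns of runs\<close>

lemma finite_fun_bounded:
  fixes g :: "'s::finite \<Rightarrow> 'a::finite \<Rightarrow> real"
  obtains B where "\<And>x y. \<bar>g x y\<bar> \<le> B"
proof
  fix x y
  show "\<bar>g x y\<bar> \<le> Max (range (\<lambda>(x, y). \<bar>g x y\<bar>))"
    by (rule Max_ge) (auto intro: image_eqI[where x="(x, y)"])
qed

lemma summable_disc_return:
  fixes g :: "'s \<Rightarrow> 'a \<Rightarrow> real"
  assumes "\<And>x y. \<bar>g x y\<bar> \<le> B" "0 \<le> \<gamma>" "\<gamma> < 1"
  shows "summable (\<lambda>i. \<gamma> ^ i * g (s i) (a i))"
proof (rule summable_comparison_test')
  show "summable (\<lambda>i. \<gamma> ^ i * B)"
    using assms by (simp add: summable_mult2 summable_geometric)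
  show "norm (\<gamma> ^ i * g (s i) (a i)) \<le> \<gamma> ^ i * B" for i
    using assms by (simp add: abs_mult mult_left_mono)
qed

lemma abs_disc_return_le:
  fixes g :: "'s \<Rightarrow> 'a \<Rightarrow> real"
  assumes "\<And>x y. \<bar>g x y\<bar> \<le> B" "0 \<le> \<gamma>" "\<gamma> < 1"
  shows "\<bar>disc_return \<gamma> g s a\<bar> \<le> B / (1 - \<gamma>)"
proof -
  have "(\<lambda>i. \<gamma> ^ i) sums (1 / (1 - \<gamma>))"
    by (rule geometric_sums) (use assms in simp)
  from sums_mult2[OF this, of B]
  have geom: "(\<lambda>i. \<gamma> ^ i * B) sums (B / (1 - \<gamma>))"
    by simp
  have ret: "(\<lambda>i. \<gamma> ^ i * g (s i) (a i)) sums disc_return \<gamma> g s a"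
    unfolding disc_return_def using assms by (intro summable_sums summable_disc_return)
  have bound: "\<bar>\<gamma> ^ i * g (s i) (a i)\<bar> \<le> \<gamma> ^ i * B" for i
    using assms by (simp add: abs_mult mult_left_mono)
  have "- (\<gamma> ^ i * B) \<le> \<gamma> ^ i * g (s i) (a i)" "\<gamma> ^ i * g (s i) (a i) \<le> \<gamma> ^ i * B" for i
    using bound[of i] by linarith+
  with sums_le[OF _ sums_minus[OF geom] ret] sums_le[OF _ ret geom] show ?thesis
    by (simp add: abs_le_iff)
qed

lemma disc_return_shift:
  fixes g :: "'s \<Rightarrow> 'a \<Rightarrow> real"
  assumes "\<And>x y. \<bar>g x y\<bar> \<le> B" "0 \<le> \<gamma>" "\<gamma> < 1"
  shows "disc_return \<gamma> g s a =
    g (s 0) (a 0) + \<gamma> * disc_return \<gamma> g (\<lambda>i. s (Suc i)) (\<lambda>i. a (Suc i))"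
proof -
  from suminf_split_head[OF summable_disc_return[where g=g, OF assms, where s=s and a=a]]
    suminf_mult[OF summable_disc_return[where g=g, OF assms, where s="\<lambda>i. s (Suc i)" and a="\<lambda>i. a (Suc i)"], of \<gamma>]
  show ?thesis
    unfolding disc_return_def by (simp add: mult.assoc)
qed

lemma is_run_shift:
  "is_run A D s a \<longleftrightarrow>
    a 0 \<in> A (s 0) \<and> s 1 \<in> D (s 0) (a 0) \<and> is_run A D (\<lambda>i. s (Suc i)) (\<lambda>i. a (Suc i))"
  unfolding is_run_def by (metis One_nat_def not0_implies_Suc)

lemma policy_run_exists:
  assumes "is_policy A \<pi>" and "\<And>s a. a \<in> A s \<Longrightarrow> D s a \<noteq> {}"
  obtains s a where "is_run A D s a" "s 0 = z" "\<forall>i. a i = \<pi> (s i)"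
proof
  define succ where "succ s = (SOME s'. s' \<in> D s (\<pi> s))" for s
  have "succ s \<in> D s (\<pi> s)" for s
    using assms unfolding succ_def is_policy_def by (metis some_in_eq)
  then show "is_run A D (\<lambda>i. (succ ^^ i) z) (\<lambda>i. \<pi> ((succ ^^ i) z))"
    using assms(1) unfolding is_run_def is_policy_def by simp
qed simp_all

lemma all_nat_split_zero: "(\<forall>i. P i) \<longleftrightarrow> P 0 \<and> (\<forall>i\<ge>1. P (i::nat))"
  by (metis less_one not_le)

lemma v_returns_eq_q_returns: "v_returns A D \<gamma> g \<pi> s0 = q_returns A D \<gamma> g \<pi> s0 (\<pi> s0)"
proof -
  have "(\<forall>i. a i = \<pi> (s i)) \<longleftrightarrow> a 0 = \<pi> s0 \<and> (\<forall>i\<ge>1. a i = \<pi> (s i))" if "s 0 = s0"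
    for s :: "nat \<Rightarrow> 'a" and a :: "nat \<Rightarrow> 'b"
    using that all_nat_split_zero[of "\<lambda>i. a i = \<pi> (s i)"] by simp
  then show ?thesis
    unfolding v_returns_def q_returns_def by (simp cong: conj_cong)
qed

lemma v_returns_nonempty:
  assumes "is_policy A \<pi>" and "\<And>s a. a \<in> A s \<Longrightarrow> D s a \<noteq> {}"
  shows "v_returns A D \<gamma> g \<pi> s0 \<noteq> {}"
proof -
  obtain s a where "is_run A D s a" "s 0 = s0" "\<forall>i. a i = \<pi> (s i)"
    using policy_run_exists[OF assms] .
  then show ?thesis
    unfolding v_returns_def by blast
qed

lemma v_returns_bounded:
  fixes g :: "'s \<Rightarrow> 'a \<Rightarrow> real"
  assumes "\<And>x y. \<bar>g x y\<bar> \<le> B" "0 \<le> \<gamma>" "\<gamma> < 1"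
  shows "bdd_above (v_returns A D \<gamma> g \<pi> s0)" "bdd_below (v_returns A D \<gamma> g \<pi> s0)"
proof -
  have bound: "\<bar>r\<bar> \<le> B / (1 - \<gamma>)" if "r \<in> v_returns A D \<gamma> g \<pi> s0" for r
    using that abs_disc_return_le[where g=g, OF assms] unfolding v_returns_def by blast
  then show "bdd_above (v_returns A D \<gamma> g \<pi> s0)"
    by (meson abs_le_D1 bdd_aboveI)
  from bound show "bdd_below (v_returns A D \<gamma> g \<pi> s0)"
    by (meson abs_le_D2 bdd_belowI minus_le_iff)
qed

lemma q_returns_eq_image:
  fixes g :: "'s \<Rightarrow> 'a \<Rightarrow> real"
  assumes bound: "\<And>x y. \<bar>g x y\<bar> \<le> B" "0 \<le> \<gamma>" "\<gamma> < 1" and a0: "a0 \<in> A s0"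
  shows "q_returns A D \<gamma> g \<pi> s0 a0 =
    (\<lambda>r. g s0 a0 + \<gamma> * r) ` (\<Union>s1\<in>D s0 a0. v_returns A D \<gamma> g \<pi> s1)"
proof (intro equalityI subsetI)
  fix x
  assume "x \<in> q_returns A D \<gamma> g \<pi> s0 a0"
  then obtain s a where x: "x = disc_return \<gamma> g s a" and run: "is_run A D s a"
    and start: "s 0 = s0" "a 0 = a0" and follow: "\<forall>i\<ge>1. a i = \<pi> (s i)"
    unfolding q_returns_def by blast
  have tail_run: "is_run A D (\<lambda>i. s (Suc i)) (\<lambda>i. a (Suc i))" and s1: "s 1 \<in> D s0 a0"
    using run start is_run_shift[of A D s a] by simp_all
  have "\<forall>i. a (Suc i) = \<pi> (s (Suc i))"
    using follow by simp
  with tail_run have "disc_return \<gamma> g (\<lambda>i. s (Suc i)) (\<lambda>i. a (Suc i)) \<in> v_returns A D \<gamma> g \<pi> (s 1)"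
    unfolding v_returns_def by fastforce
  moreover have "x = g s0 a0 + \<gamma> * disc_return \<gamma> g (\<lambda>i. s (Suc i)) (\<lambda>i. a (Suc i))"
    using x start disc_return_shift[where g=g, OF bound, where s=s and a=a] by simp
  ultimately show "x \<in> (\<lambda>r. g s0 a0 + \<gamma> * r) ` (\<Union>s1\<in>D s0 a0. v_returns A D \<gamma> g \<pi> s1)"
    using s1 by blast
next
  fix x
  assume "x \<in> (\<lambda>r. g s0 a0 + \<gamma> * r) ` (\<Union>s1\<in>D s0 a0. v_returns A D \<gamma> g \<pi> s1)"
  then obtain t b where x: "x = g s0 a0 + \<gamma> * disc_return \<gamma> g t b"
    and run: "is_run A D t b" "t 0 \<in> D s0 a0" and follow: "\<forall>i. b i = \<pi> (t i)"
    unfolding v_returns_def by blast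
  have "is_run A D (case_nat s0 t) (case_nat a0 b)"
    using run a0 is_run_shift[of A D "case_nat s0 t" "case_nat a0 b"] by simp
  moreover have "x = disc_return \<gamma> g (case_nat s0 t) (case_nat a0 b)"
    using x disc_return_shift[where g=g, OF bound, where s="case_nat s0 t" and a="case_nat a0 b"] by simp
  moreover have "\<forall>i\<ge>1. case_nat a0 b i = \<pi> (case_nat s0 t i)"
    using follow by (auto split: nat.split)
  ultimately show "x \<in> q_returns A D \<gamma> g \<pi> s0 a0"
    unfolding q_returns_def by fastforce
qed

lemma q_max_bellman:
  fixes g :: "'s::finite \<Rightarrow> 'a::finite \<Rightarrow> real"
  assumes \<pi>: "is_policy A \<pi>" and D_ne: "\<And>s a. a \<in> A s \<Longrightarrow> D s a \<noteq> {}"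
    and \<gamma>: "0 \<le> \<gamma>" "\<gamma> < 1" and a0: "a0 \<in> A s0"
  shows "q_max A D \<gamma> g \<pi> s0 a0 = g s0 a0 + \<gamma> * Max (v_max A D \<gamma> g \<pi> ` D s0 a0)"
proof -
  obtain B where B: "\<And>x y. \<bar>g x y\<bar> \<le> B"
    using finite_fun_bounded[where g=g] by blast
  note nonempty = v_returns_nonempty[OF \<pi> D_ne] and bounded = v_returns_bounded[where g=g, OF B \<gamma>]
  have "q_max A D \<gamma> g \<pi> s0 a0 =
      Sup ((\<lambda>r. g s0 a0 + \<gamma> * r) ` (\<Union>s1\<in>D s0 a0. v_returns A D \<gamma> g \<pi> s1))"
    unfolding q_max_def q_returns_eq_image[where g=g and A=A, OF B \<gamma> a0] ..
  also have "\<dots> = g s0 a0 + \<gamma> * Sup (\<Union>s1\<in>D s0 a0. v_returns A D \<gamma> g \<pi> s1)"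
    using D_ne[OF a0] nonempty bounded \<gamma> by (intro Sup_affine_image) auto
  also have "Sup (\<Union>s1\<in>D s0 a0. v_returns A D \<gamma> g \<pi> s1) = Max (v_max A D \<gamma> g \<pi> ` D s0 a0)"
    unfolding v_max_def using D_ne[OF a0] nonempty bounded by (intro Sup_UN_finite) auto
  finally show ?thesis .
qed

lemma q_min_bellman:
  fixes g :: "'s::finite \<Rightarrow> 'a::finite \<Rightarrow> real"
  assumes \<pi>: "is_policy A \<pi>" and D_ne: "\<And>s a. a \<in> A s \<Longrightarrow> D s a \<noteq> {}"
    and \<gamma>: "0 \<le> \<gamma>" "\<gamma> < 1" and a0: "a0 \<in> A s0"
  shows "q_min A D \<gamma> g \<pi> s0 a0 = g s0 a0 + \<gamma> * Min (v_min A D \<gamma> g \<pi> ` D s0 a0)"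
proof -
  obtain B where B: "\<And>x y. \<bar>g x y\<bar> \<le> B"
    using finite_fun_bounded[where g=g] by blast
  note nonempty = v_returns_nonempty[OF \<pi> D_ne] and bounded = v_returns_bounded[where g=g, OF B \<gamma>]
  have "q_min A D \<gamma> g \<pi> s0 a0 =
      Inf ((\<lambda>r. g s0 a0 + \<gamma> * r) ` (\<Union>s1\<in>D s0 a0. v_returns A D \<gamma> g \<pi> s1))"
    unfolding q_min_def q_returns_eq_image[where g=g and A=A, OF B \<gamma> a0] ..
  also have "\<dots> = g s0 a0 + \<gamma> * Inf (\<Union>s1\<in>D s0 a0. v_returns A D \<gamma> g \<pi> s1)"
    using D_ne[OF a0] nonempty bounded \<gamma> by (intro Inf_affine_image) auto
  also have "Inf (\<Union>s1\<in>D s0 a0. v_returns A D \<gamma> g \<pi> s1) = Min (v_min A D \<gamma> g \<pi> ` D s0 a0)"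
    unfolding v_min_def using D_ne[OF a0] nonempty bounded by (intro Inf_UN_finite) auto
  finally show ?thesis .
qed

lemma bellman_system_max:
  fixes A :: "'s::finite \<Rightarrow> 'a::finite set" and g :: "'s \<Rightarrow> 'a \<Rightarrow> real"
  assumes "\<And>s. A s \<noteq> {}" and "\<And>s a. a \<in> A s \<Longrightarrow> D s a \<noteq> {}" and "0 \<le> \<gamma>" "\<gamma> < 1"
  shows "bellman_system A D g \<gamma> (\<lambda>S f. Max (f ` S)) (v_max A D \<gamma> g) (q_max A D \<gamma> g)"
proof (unfold_locales; (rule assms)?)
  fix S :: "'s set" and f h :: "'s \<Rightarrow> real" and c
  assume "S \<noteq> {}" "\<And>x. x \<in> S \<Longrightarrow> f x - h x \<le> c"
  with finite show "Max (f ` S) - Max (h ` S) \<le> c"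
    by (rule Max_image_diff_le)
next
  fix \<pi> a s
  assume "is_policy A \<pi>" "a \<in> A s"
  with assms(2-4) show "q_max A D \<gamma> g \<pi> s a = g s a + \<gamma> * Max (v_max A D \<gamma> g \<pi> ` D s a)"
    by (intro q_max_bellman)
next
  fix \<pi> s
  show "v_max A D \<gamma> g \<pi> s = q_max A D \<gamma> g \<pi> s (\<pi> s)"
    unfolding v_max_def q_max_def v_returns_eq_q_returns ..
qed

lemma bellman_system_min:
  fixes A :: "'s::finite \<Rightarrow> 'a::finite set" and g :: "'s \<Rightarrow> 'a \<Rightarrow> real"
  assumes "\<And>s. A s \<noteq> {}" and "\<And>s a. a \<in> A s \<Longrightarrow> D s a \<noteq> {}" and "0 \<le> \<gamma>" "\<gamma> < 1"
  shows "bellman_system A D g \<gamma> (\<lambda>S f. Min (f ` S)) (v_min A D \<gamma> g) (q_min A D \<gamma> g)"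
proof (unfold_locales; (rule assms)?)
  fix S :: "'s set" and f h :: "'s \<Rightarrow> real" and c
  assume "S \<noteq> {}" "\<And>x. x \<in> S \<Longrightarrow> f x - h x \<le> c"
  with finite show "Min (f ` S) - Min (h ` S) \<le> c"
    by (rule Min_image_diff_le)
next
  fix \<pi> a s
  assume "is_policy A \<pi>" "a \<in> A s"
  with assms(2-4) show "q_min A D \<gamma> g \<pi> s a = g s a + \<gamma> * Min (v_min A D \<gamma> g \<pi> ` D s a)"
    by (intro q_min_bellman)
next
  fix \<pi> s
  show "v_min A D \<gamma> g \<pi> s = q_min A D \<gamma> g \<pi> s (\<pi> s)"
    unfolding v_min_def q_min_def v_returns_eq_q_returns ..
qed

theorem corollary2:
  fixes A :: "'s::finite \<Rightarrow> 'a::finite set"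
    and Delta :: "'s \<Rightarrow> 'a \<Rightarrow> 's set"
    and gmax gmin :: "'s \<Rightarrow> 'a \<Rightarrow> real"
    and \<gamma> :: real
  assumes A_ne: "\<And>s. A s \<noteq> {}"
    and Delta_ne: "\<And>s a. a \<in> A s \<Longrightarrow> Delta s a \<noteq> {}"
    and gamma: "0 < \<gamma>" "\<gamma> < 1"
  shows "(\<exists>\<pi>. is_policy A \<pi> \<and> v_max A Delta \<gamma> gmax \<pi> = v_max_opt A Delta \<gamma> gmax)
       \<and> (\<exists>\<pi>. is_policy A \<pi> \<and> v_min A Delta \<gamma> gmin \<pi> = v_min_opt A Delta \<gamma> gmin)
       \<and> (\<forall>\<pi>. is_policy A \<pi> \<and>
              (\<forall>s. q_max_opt A Delta \<gamma> gmax s (\<pi> s) = Max (q_max_opt A Delta \<gamma> gmax s ` A s))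
              \<longrightarrow> v_max A Delta \<gamma> gmax \<pi> = v_max_opt A Delta \<gamma> gmax)
       \<and> (\<forall>\<pi>. is_policy A \<pi> \<and>
              (\<forall>s. q_min_opt A Delta \<gamma> gmin s (\<pi> s) = Max (q_min_opt A Delta \<gamma> gmin s ` A s))
              \<longrightarrow> v_min A Delta \<gamma> gmin \<pi> = v_min_opt A Delta \<gamma> gmin)"
proof -
  interpret max: bellman_system A Delta gmax \<gamma> "\<lambda>S f. Max (f ` S)" "v_max A Delta \<gamma> gmax" "q_max A Delta \<gamma> gmax"
    using bellman_system_max[OF A_ne Delta_ne] gamma by simp
  interpret min: bellman_system A Delta gmin \<gamma> "\<lambda>S f. Min (f ` S)" "v_min A Delta \<gamma> gmin" "q_min A Delta \<gamma> gmin"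
    using bellman_system_min[OF A_ne Delta_ne] gamma by simp
  have opt_eqs: "max.v_opt = v_max_opt A Delta \<gamma> gmax" "max.q_opt = q_max_opt A Delta \<gamma> gmax"
    "min.v_opt = v_min_opt A Delta \<gamma> gmin" "min.q_opt = q_min_opt A Delta \<gamma> gmin"
    unfolding fun_eq_iff max.v_opt_def max.q_opt_def min.v_opt_def min.q_opt_def
      v_max_opt_def q_max_opt_def v_min_opt_def q_min_opt_def by simp_all
  show ?thesis
    unfolding opt_eqs[symmetric]
    using max.exists_optimal_policy max.greedy_policy_optimal
      min.exists_optimal_policy min.greedy_policy_optimal by blast
qed

end
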